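(* Let $s\ge r\ge 2$, let $Q$ be an $s$-vertex $r$-graph and let $\mathcal P$ be a hereditary property of $r$-graphs. Then for every $p>1$, $$\lambda^{(p)}(Q,\mathcal P)=\pi(Q,\mathcal P).$$
   Context: An $r$-graph ($r\ge 2$) is a finite hypergraph all of whose edges have exactly $r$ vertices. For $I\subseteq V(H)$, $H[I]$ denotes the induced subhypergraph on $I$. For an $s$-vertex $r$-graph $Q$ and an $r$-graph $H$, $\mathcal N(Q,H)$ is the number of (not necessarily induced) subgraphs of $H$ isomorphic to $Q$. For an $n$-vertex $r$-graph $H$ with vertex set $[n]$ and $\mathbf x\in\mathbb R^n$, $P_{Q,H}(\mathbf x)=s!\sum_{\{i_1,\dots,i_s\}\in\binom{[n]}{s}}\mathcal N(Q,H[\{i_1,\dots,i_s\}])\,x_{i_1}\cdots x_{i_s}$, and for $p\ge1$, $\lambda^{(p)}(Q,H)=\max_{\|\mathbf x\|_p=1}P_{Q,H}(\mathbf x)$. A hereditary property $\mathcal P$ of $r$-graphs is a family of $r$-graphs closed under isomorphism and under taking induced subgraphs; as a standing assumption, whenever $H\in\mathcal P$, the disjoint union of $H$ with an isolated vertex is also in $\mathcal P$. $\mathcal P_n$ is the set of members of $\mathcal P$ with $n$ vertices. $ex(Q,\mathcal P_n)=\max\{\mathcal N(Q,H):H\in\mathcal P_n\}$ and $\pi(Q,\mathcal P)=\lim_{n\to\infty}ex(Q,\mathcal P_n)/\binom ns$ (this limit exists). $\lambda^{(p)}(Q,\mathcal P_n)=\max\{\lambda^{(p)}(Q,H):H\in\mathcal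 P_n\}$ and $\lambda^{(p)}(Q,\mathcal P)=\lim_{n\to\infty}\lambda^{(p)}(Q,\mathcal P_n)n^{s/p-s}$ (this limit exists). *)

theory Defs
  imports "HOL-Analysis.Analysis"
begin

type_synonym hgraph = "nat set \<times> nat set set"

definition verts :: "hgraph \<Rightarrow> nat set" where "verts H = fst H"
definition edges :: "hgraph \<Rightarrow> nat set set" where "edges H = snd H"

definition rgraph :: "nat \<Rightarrow> hgraph \<Rightarrow> bool" where
  "rgraph r H \<longleftrightarrow> finite (verts H) \<and> (\<forall>e\<in>edges H. e \<subseteq> verts H \<and> card e = r)"

definition iso :: "hgraph \<Rightarrow> hgraph \<Rightarrow> bool" where
  "iso H G \<longleftrightarrow> (\<exists>f. bij_betw f (verts H) (verts G) \<and> edges G = (\<lambda>e. f ` e) ` edges H)"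

definition induced :: "hgraph \<Rightarrow> nat set \<Rightarrow> hgraph" where
  "induced H I = (I, {e \<in> edges H. e \<subseteq> I})"

text \<open>Hereditary property of r-graphs, with the standing assumption
  (closure under adding an isolated vertex).\<close>
definition hereditary :: "nat \<Rightarrow> hgraph set \<Rightarrow> bool" where
  "hereditary r P \<longleftrightarrow>
     (\<forall>H\<in>P. rgraph r H) \<and>
     (\<forall>H G. H \<in> P \<longrightarrow> rgraph r G \<longrightarrow> iso H G \<longrightarrow> G \<in> P) \<and>
     (\<forall>H I. H \<in> P \<longrightarrow> I \<subseteq> verts H \<longrightarrow> induced H I \<in> P) \<and>
     (\<forall>H v. H \<in> P \<longrightarrow> v \<notin> verts H \<longrightarrow> (insert v (verts H), edges H) \<in> P)"

definition numsub :: "hgraph \<Rightarrow> hgraph \<Rightarrow> nat" where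
  "numsub Q H = card {G. verts G \<subseteq> verts H \<and> edges G \<subseteq> edges H \<and>
                        (\<forall>e\<in>edges G. e \<subseteq> verts G) \<and> iso G Q}"

text \<open>The polynomial P_{Q,H}(x); vertex set of H plays the role of [n].\<close>
definition polyQ :: "hgraph \<Rightarrow> hgraph \<Rightarrow> (nat \<Rightarrow> real) \<Rightarrow> real" where
  "polyQ Q H x = fact (card (verts Q)) *
     (\<Sum>I\<in>{I. I \<subseteq> verts H \<and> card I = card (verts Q)}.
        real (numsub Q (induced H I)) * (\<Prod>i\<in>I. x i))"

definition pnorm :: "real \<Rightarrow> nat set \<Rightarrow> (nat \<Rightarrow> real) \<Rightarrow> real" where
  "pnorm p V x = (\<Sum>i\<in>V. \<bar>x i\<bar> powr p) powr (1 / p)"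

definition lam :: "real \<Rightarrow> hgraph \<Rightarrow> hgraph \<Rightarrow> real" where
  "lam p Q H = Sup {polyQ Q H x | x. pnorm p (verts H) x = 1}"

definition Pn :: "hgraph set \<Rightarrow> nat \<Rightarrow> hgraph set" where
  "Pn P n = {H \<in> P. card (verts H) = n}"

definition ex_num :: "hgraph \<Rightarrow> hgraph set \<Rightarrow> nat \<Rightarrow> nat" where
  "ex_num Q P n = Max (numsub Q ` Pn P n)"

definition pi_dens :: "hgraph \<Rightarrow> hgraph set \<Rightarrow> real" where
  "pi_dens Q P = lim (\<lambda>n. real (ex_num Q P n) / real (n choose card (verts Q)))"

definition lam_n :: "real \<Rightarrow> hgraph \<Rightarrow> hgraph set \<Rightarrow> nat \<Rightarrow> real" where
  "lam_n p Q P n = Sup (lam p Q ` Pn P n)"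

definition lam_prop :: "real \<Rightarrow> hgraph \<Rightarrow> hgraph set \<Rightarrow> real" where
  "lam_prop p Q P = lim (\<lambda>n. lam_n p Q P n *
       real n powr (real (card (verts Q)) / p - real (card (verts Q))))"

end

(*
  Lower bound: for the uniform vector x_i = n^(-1/p) one has P_{Q,H}(x) = s! N(Q,H) n^(-s/p),
  so the normalised Lagrangian is at least s! ex(Q,P_n) / n^s, which tends to pi(Q,P).

  Upper bound: the densities ex(Q,P_k) / binom(k,s) decrease to pi, so for every beta > pi
  there is C with ex(Q,P_k) <= beta binom(k,s) + C for all k.  Given x with ||x||_p = 1,
  truncate |x| at height c = T n^(-1/p) to get u.  Then P_{Q,H}(u/c)/s! is the expected
  number of copies of Q in H[S], where S contains each vertex i independently with
  probability u_i/c; since H[S] lies in the property, this is at most beta E binom(|S|,s) + C,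
  whence P_{Q,H}(u) <= beta (sum u)^s + s! c^s C.  By Hoelder, sum |x| <= n^(1-1/p) and the
  excess |x| - u has l_1-norm at most T^(1-p) n^(1-1/p); as the coefficients of P_{Q,H} are
  bounded, the excess costs O(T^(1-p)) after normalisation.  Choosing first T and then n
  large gives the upper bound pi.
*)
theory Submission
  imports Defs "HOL-Library.FuncSet"
begin

section \<open>Random subsets and elementary symmetric polynomials\<close>

text \<open>The probability that a random subset of \<open>V\<close>, containing each \<open>i\<close> independently with
  probability \<open>q i\<close>, equals \<open>S\<close>.\<close>
definition bernoulli_weight :: "'a set \<Rightarrow> ('a \<Rightarrow> real) \<Rightarrow> 'a set \<Rightarrow> real" where
  "bernoulli_weight V q S = (\<Prod>i\<in>S. q i) * (\<Prod>i\<in>V - S. 1 - q i)"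

lemma bernoulli_weight_nonneg:
  assumes "\<And>i. i \<in> V \<Longrightarrow> 0 \<le> q i \<and> q i \<le> 1" and "S \<subseteq> V"
  shows "0 \<le> bernoulli_weight V q S"
  unfolding bernoulli_weight_def using assms by (intro mult_nonneg_nonneg prod_nonneg) auto

lemma sum_bernoulli_weight_supersets:
  assumes fin: "finite V" and "I \<subseteq> V"
  shows "(\<Sum>S\<in>{S \<in> Pow V. I \<subseteq> S}. bernoulli_weight V q S) = (\<Prod>i\<in>I. q i)"
proof -
  have fin_I: "finite I" using fin \<open>I \<subseteq> V\<close> finite_subset by blast
  have "(\<Sum>S\<in>{S \<in> Pow V. I \<subseteq> S}. bernoulli_weight V q S)
      = (\<Sum>B\<in>Pow (V - I). bernoulli_weight V q (I \<union> B))"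
    by (rule sum.reindex_bij_witness[of _ "\<lambda>B. I \<union> B" "\<lambda>S. S - I"])
      (use \<open>I \<subseteq> V\<close> in \<open>auto simp: Un_absorb1\<close>)
  also have "\<dots> = (\<Sum>B\<in>Pow (V - I). (\<Prod>i\<in>I. q i) * bernoulli_weight (V - I) q B)"
  proof (rule sum.cong[OF refl])
    fix B assume B: "B \<in> Pow (V - I)"
    then have "finite B" using fin finite_subset by blast
    moreover have "V - (I \<union> B) = (V - I) - B" by auto
    ultimately show "bernoulli_weight V q (I \<union> B) = (\<Prod>i\<in>I. q i) * bernoulli_weight (V - I) q B"
      unfolding bernoulli_weight_def using B fin_I by (subst prod.union_disjoint) auto
  qed
  also have "\<dots> = (\<Prod>i\<in>I. q i) * (\<Prod>i\<in>V - I. q i + (1 - q i))"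
    using prod_add[of "V - I" q "\<lambda>i. 1 - q i"] fin
    by (simp add: bernoulli_weight_def sum_distrib_left[symmetric])
  finally show ?thesis by simp
qed

lemma sum_bernoulli_weight: "finite V \<Longrightarrow> (\<Sum>S\<in>Pow V. bernoulli_weight V q S) = 1"
  using sum_bernoulli_weight_supersets[of V "{}" q] by (simp add: Pow_def)

lemma sum_bernoulli_weight_mult_sum_subsets:
  assumes fin: "finite V"
  shows "(\<Sum>S\<in>Pow V. bernoulli_weight V q S * (\<Sum>I\<in>{I. I \<subseteq> S \<and> card I = k}. c I))
       = (\<Sum>I\<in>{I. I \<subseteq> V \<and> card I = k}. c I * (\<Prod>i\<in>I. q i))"
proof -
  let ?w = "bernoulli_weight V q" and ?K = "{I. I \<subseteq> V \<and> card I = k}"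
  have "(\<Sum>S\<in>Pow V. ?w S * (\<Sum>I\<in>{I. I \<subseteq> S \<and> card I = k}. c I))
      = (\<Sum>S\<in>Pow V. \<Sum>I\<in>{I \<in> ?K. I \<subseteq> S}. ?w S * c I)"
    by (intro sum.cong refl) (auto simp: sum_distrib_left intro!: sum.cong)
  also have "\<dots> = (\<Sum>I\<in>?K. \<Sum>S\<in>{S \<in> Pow V. I \<subseteq> S}. ?w S * c I)"
    by (rule sum.swap_restrict) (use fin in auto)
  also have "\<dots> = (\<Sum>I\<in>?K. c I * (\<Prod>i\<in>I. q i))"
    using sum_bernoulli_weight_supersets[OF fin]
    by (intro sum.cong refl) (simp add: sum_distrib_right[symmetric])
  finally show ?thesis .
qed

definition esym :: "nat \<Rightarrow> 'a set \<Rightarrow> ('a \<Rightarrow> real) \<Rightarrow> real" where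
  "esym k V w = (\<Sum>I\<in>{I. I \<subseteq> V \<and> card I = k}. \<Prod>i\<in>I. w i)"

lemma esym_scale: "esym k V (\<lambda>i. c * w i) = c ^ k * esym k V w"
  unfolding esym_def sum_distrib_left
  by (intro sum.cong refl) (auto simp: prod.distrib)

lemma sum_bernoulli_weight_binomial:
  assumes fin: "finite V"
  shows "(\<Sum>S\<in>Pow V. bernoulli_weight V q S * real (card S choose k)) = esym k V q"
proof -
  have "real (card S choose k) = (\<Sum>I\<in>{I. I \<subseteq> S \<and> card I = k}. 1)" if "S \<in> Pow V" for S
    using that fin n_subsets[of S k] finite_subset by (metis PowD real_of_card)
  then show ?thesis
    using sum_bernoulli_weight_mult_sum_subsets[OF fin, where q=q and k=k and c="\<lambda>_. 1"]
    by (simp add: esym_def)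
qed

lemma fact_esym_eq_sum_inj:
  assumes fin: "finite V"
  shows "fact k * esym k V w = (\<Sum>g\<in>{g \<in> {..<k} \<rightarrow>\<^sub>E V. inj_on g {..<k}}. \<Prod>j<k. w (g j))"
proof -
  let ?Inj = "{g \<in> {..<k} \<rightarrow>\<^sub>E V. inj_on g {..<k}}" and ?K = "{I. I \<subseteq> V \<and> card I = k}"
  have fin_Inj: "finite ?Inj"
    by (rule finite_subset[of _ "{..<k} \<rightarrow>\<^sub>E V"]) (use fin in \<open>auto intro: finite_PiE\<close>)
  have image: "(\<lambda>g. g ` {..<k}) ` ?Inj \<subseteq> ?K"
    by (auto simp: card_image PiE_def)
  have fibre: "{g \<in> ?Inj. g ` {..<k} = I} = {g \<in> {..<k} \<rightarrow>\<^sub>E I. inj_on g {..<k}}" if "I \<in> ?K" for I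
  proof -
    have "finite I" using that fin finite_subset by blast
    then have "g ` {..<k} = I" if "g \<in> {..<k} \<rightarrow>\<^sub>E I" "inj_on g {..<k}" for g
      using that \<open>I \<in> ?K\<close> card_subset_eq[of I "g ` {..<k}"] by (auto simp: card_image PiE_def)
    then show ?thesis using that by (auto simp: PiE_def)
  qed
  have card_fibre: "card {g \<in> {..<k} \<rightarrow>\<^sub>E I. inj_on g {..<k}} = fact k" if "I \<in> ?K" for I
  proof -
    have "finite I" using that fin finite_subset by blast
    then have "card {g \<in> {..<k} \<rightarrow>\<^sub>E I. inj_on g {..<k}} = (\<Prod>i = 0..<k. k - i)"
      using card_inj_on_subset_funcset[of "{..<k}" I "{..<k}"] that by simp
    then show ?thesis by (simp add: fact_prod_rev)
  qed
  have "(\<Sum>g\<in>?Inj. \<Prod>j<k. w (g j)) = (\<Sum>I\<in>?K. \<Sum>g\<in>{g \<in> ?Inj. g ` {..<k} = I}. \<Prod>j<k. w (g j))"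
    using fin by (intro sum.group[OF fin_Inj _ image, symmetric]) simp
  also have "\<dots> = (\<Sum>I\<in>?K. \<Sum>g\<in>{g \<in> ?Inj. g ` {..<k} = I}. \<Prod>i\<in>I. w i)"
    by (intro sum.cong refl) (auto simp: prod.reindex)
  also have "\<dots> = (\<Sum>I\<in>?K. fact k * (\<Prod>i\<in>I. w i))"
    using fibre card_fibre by (intro sum.cong refl) simp
  finally show ?thesis by (simp add: esym_def sum_distrib_left)
qed

lemma fact_esym_le_sum_power:
  assumes fin: "finite V" and nonneg: "\<And>i. i \<in> V \<Longrightarrow> 0 \<le> w i"
  shows "fact k * esym k V w \<le> (\<Sum>i\<in>V. w i) ^ k"
proof -
  have "fact k * esym k V w \<le> (\<Sum>g\<in>{..<k} \<rightarrow>\<^sub>E V. \<Prod>j<k. w (g j))"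
    unfolding fact_esym_eq_sum_inj[OF fin] using fin nonneg
    by (intro sum_mono2 finite_PiE) (auto intro!: prod_nonneg simp: PiE_def)
  also have "\<dots> = (\<Sum>i\<in>V. w i) ^ k"
    using prod_sum_PiE[of "{..<k}" "\<lambda>_. V" "\<lambda>_. w"] fin by simp
  finally show ?thesis .
qed

lemma fact_esym_diff_le:
  assumes fin: "finite V" and "\<And>i. i \<in> V \<Longrightarrow> 0 \<le> u i" and "\<And>i. i \<in> V \<Longrightarrow> u i \<le> x i"
  shows "fact k * (esym k V x - esym k V u) \<le> (\<Sum>i\<in>V. x i) ^ k - (\<Sum>i\<in>V. u i) ^ k"
proof -
  have "fact k * (esym k V x - esym k V u)
      = (\<Sum>g\<in>{g \<in> {..<k} \<rightarrow>\<^sub>E V. inj_on g {..<k}}. (\<Prod>j<k. x (g j)) - (\<Prod>j<k. u (g j)))"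
    by (simp add: right_diff_distrib fact_esym_eq_sum_inj[OF fin] sum_subtractf)
  also have "\<dots> \<le> (\<Sum>g\<in>{..<k} \<rightarrow>\<^sub>E V. (\<Prod>j<k. x (g j)) - (\<Prod>j<k. u (g j)))"
    using fin assms by (intro sum_mono2 finite_PiE) (auto intro!: prod_mono simp: PiE_def)
  also have "\<dots> = (\<Sum>i\<in>V. x i) ^ k - (\<Sum>i\<in>V. u i) ^ k"
    using prod_sum_PiE[of "{..<k}" "\<lambda>_. V" "\<lambda>_. x"] prod_sum_PiE[of "{..<k}" "\<lambda>_. V" "\<lambda>_. u"] fin
    by (simp add: sum_subtractf)
  finally show ?thesis .
qed

section \<open>Analytic estimates\<close>

lemma power_diff_le_mult:
  fixes a b :: real
  assumes "0 \<le> b" "b \<le> a"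
  shows "a ^ Suc k - b ^ Suc k \<le> Suc k * a ^ k * (a - b)"
proof (induction k)
  case 0
  then show ?case by simp
next
  case (Suc k)
  have "a ^ Suc (Suc k) - b ^ Suc (Suc k) = a * (a ^ Suc k - b ^ Suc k) + (a - b) * b ^ Suc k"
    by (simp add: algebra_simps)
  also have "\<dots> \<le> a * (Suc k * a ^ k * (a - b)) + (a - b) * a ^ Suc k"
    using Suc assms by (intro add_mono mult_left_mono power_mono) auto
  also have "\<dots> = Suc (Suc k) * a ^ Suc k * (a - b)"
    by (simp add: algebra_simps)
  finally show ?case .
qed

lemma sum_powr_eq_one_if_pnorm_eq_one:
  assumes "pnorm p V x = 1" and "p > 0"
  shows "(\<Sum>i\<in>V. \<bar>x i\<bar> powr p) = 1"
proof -
  have "((\<Sum>i\<in>V. \<bar>x i\<bar> powr p) powr (1 / p)) powr p = 1"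
    using assms(1) by (simp add: pnorm_def)
  then show ?thesis
    using assms(2) by (simp add: powr_powr sum_nonneg)
qed

lemma pnorm_uniform:
  assumes "finite V" and "V \<noteq> {}" and "p > 0"
  shows "pnorm p V (\<lambda>_. 1 / real (card V) powr (1 / p)) = 1"
proof -
  have "card V > 0" using assms by (simp add: card_gt_0_iff)
  then have "(\<Sum>i\<in>V. \<bar>1 / real (card V) powr (1 / p)\<bar> powr p) = 1"
    using assms(3) by (simp add: powr_divide powr_powr)
  then show ?thesis by (simp add: pnorm_def)
qed

text \<open>Hoelder's inequality against the constant vector, proved termwise by Young's inequality.\<close>
lemma sum_le_if_sum_powr_eq_one:
  fixes y :: "'a \<Rightarrow> real"
  assumes fin: "finite V" and "V \<noteq> {}" and p: "p > 1"
    and nonneg: "\<And>i. i \<in> V \<Longrightarrow> 0 \<le> y i" and one: "(\<Sum>i\<in>V. y i powr p) = 1"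
  shows "(\<Sum>i\<in>V. y i) \<le> real (card V) / real (card V) powr (1 / p)"
proof -
  define n where "n = real (card V)"
  define m where "m = n powr (1 / p)"
  define q where "q = p / (p - 1)"
  have "n > 0" using assms(1,2) by (simp add: n_def card_gt_0_iff)
  then have "m > 0" and m_powr: "m powr p = n"
    using p by (simp_all add: m_def powr_powr)
  have "q > 1" and pq: "1 / p + 1 / q = 1"
    using p by (simp_all add: q_def field_simps)
  have "(\<Sum>i\<in>V. y i * m) \<le> (\<Sum>i\<in>V. (y i * m) powr p / p + 1 powr q / q)"
    using Youngs_inequality[of p q "y i * m" 1 for i] p \<open>q > 1\<close> pq nonneg \<open>m > 0\<close>
    by (intro sum_mono) simp
  also have "\<dots> = (n / p) * (\<Sum>i\<in>V. y i powr p) + n / q"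
    using nonneg \<open>m > 0\<close> m_powr
    by (simp add: powr_mult sum.distrib sum_distrib_left mult.commute n_def)
  also have "\<dots> = n * (1 / p + 1 / q)"
    using one by (simp add: distrib_left)
  also have "\<dots> = n"
    using pq by simp
  finally have "(\<Sum>i\<in>V. y i) * m \<le> n"
    by (simp add: sum_distrib_right)
  then show ?thesis
    using \<open>m > 0\<close> by (simp add: m_def n_def field_simps)
qed

lemma sum_minus_min_le_powr:
  fixes y :: "'a \<Rightarrow> real"
  assumes p: "p > 1" and c: "c > 0" and nonneg: "\<And>i. i \<in> V \<Longrightarrow> 0 \<le> y i"
  shows "(\<Sum>i\<in>V. y i - min (y i) c) \<le> c powr (1 - p) * (\<Sum>i\<in>V. y i powr p)"
  unfolding sum_distrib_left
proof (rule sum_mono)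
  fix i assume "i \<in> V"
  show "y i - min (y i) c \<le> c powr (1 - p) * y i powr p"
  proof (cases "y i \<le> c")
    case False
    then have "y i > 0" using c by simp
    have "1 = c powr (1 - p) * c powr (p - 1)"
      using c by (simp add: powr_add[symmetric])
    also have "\<dots> \<le> c powr (1 - p) * y i powr (p - 1)"
      using False c p by (intro mult_left_mono powr_mono2) auto
    finally have "y i \<le> y i * (c powr (1 - p) * y i powr (p - 1))"
      using \<open>y i > 0\<close> by (simp add: mult_le_cancel_left1)
    also have "\<dots> = c powr (1 - p) * y i powr p"
      using \<open>y i > 0\<close> by (simp add: powr_diff field_simps)
    finally have "y i \<le> c powr (1 - p) * y i powr p" .
    then show ?thesis using False c by (simp add: min_def)
  qed simp
qed

lemma power_sum_min_gap_le:
  fixes y :: "'a \<Rightarrow> real"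
  assumes fin: "finite V" and "V \<noteq> {}" and "p > 1" and "T > 0"
    and nonneg: "\<And>i. i \<in> V \<Longrightarrow> 0 \<le> y i" and y_powr: "(\<Sum>i\<in>V. y i powr p) = 1"
  defines "n \<equiv> real (card V)"
  defines "m \<equiv> n powr (1 / p)"
  shows "(\<Sum>i\<in>V. y i) ^ k - (\<Sum>i\<in>V. min (y i) (T / m)) ^ k \<le> k * T powr (1 - p) * (n / m) ^ k"
proof (cases k)
  case (Suc k')
  let ?c = "T / m" and ?Y = "\<Sum>i\<in>V. y i" and ?U = "\<Sum>i\<in>V. min (y i) (T / m)"
  have "n > 0" using fin \<open>V \<noteq> {}\<close> by (simp add: n_def card_gt_0_iff)
  then have "m > 0" and m_powr: "m powr p = n"
    using \<open>p > 1\<close> by (simp_all add: m_def powr_powr)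
  have "?c > 0" using \<open>T > 0\<close> \<open>m > 0\<close> by simp
  have sum_y: "?Y \<le> n / m"
    using sum_le_if_sum_powr_eq_one[OF fin \<open>V \<noteq> {}\<close> \<open>p > 1\<close> nonneg y_powr] by (simp add: n_def m_def)
  have sum_u: "0 \<le> ?U" "?U \<le> ?Y"
    using nonneg \<open>?c > 0\<close> by (auto intro: sum_nonneg sum_mono)
  have "?Y - ?U = (\<Sum>i\<in>V. y i - min (y i) ?c)"
    by (simp add: sum_subtractf)
  also have "\<dots> \<le> ?c powr (1 - p)"
    using sum_minus_min_le_powr[OF \<open>p > 1\<close> \<open>?c > 0\<close>, of V y] nonneg y_powr by simp
  also have "\<dots> = T powr (1 - p) * (n / m)"
  proof -
    have "m powr (1 - p) = m / n"
      using \<open>m > 0\<close> m_powr by (simp add: powr_diff)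
    then show ?thesis
      using \<open>m > 0\<close> \<open>T > 0\<close> by (simp add: powr_divide)
  qed
  finally have tail: "?Y - ?U \<le> T powr (1 - p) * (n / m)" .
  have "?Y ^ k - ?U ^ k \<le> k * ?Y ^ k' * (?Y - ?U)"
    unfolding Suc using power_diff_le_mult[OF sum_u] by simp
  also have "\<dots> \<le> k * (n / m) ^ k' * (T powr (1 - p) * (n / m))"
    using sum_y tail sum_u \<open>n > 0\<close> \<open>m > 0\<close> nonneg
    by (intro mult_mono mult_left_mono power_mono) (auto intro: sum_nonneg)
  also have "\<dots> = k * T powr (1 - p) * (n / m) ^ k"
    unfolding Suc power_Suc by (simp only: ac_simps)
  finally show ?thesis .
qed simp

lemma fact_mult_binomial_div_power_tendsto:
  "(\<lambda>n. fact k * real (n choose k) / real n ^ k) \<longlonglongrightarrow> 1"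
proof (rule Lim_transform_eventually)
  have "(\<lambda>n. \<Prod>i=0..<k. 1 - real i / real n) \<longlonglongrightarrow> (\<Prod>i=0..<k. 1 - 0)"
    by (intro tendsto_prod tendsto_diff tendsto_const lim_const_over_n)
  then show "(\<lambda>n. \<Prod>i=0..<k. 1 - real i / real n) \<longlonglongrightarrow> 1"
    by simp
  show "\<forall>\<^sub>F n in sequentially. (\<Prod>i=0..<k. 1 - real i / real n) = fact k * real (n choose k) / real n ^ k"
    using eventually_gt_at_top[of "0::nat"]
  proof eventually_elim
    fix n :: nat assume "n > 0"
    have "fact k * real (n choose k) = (\<Prod>i=0..<k. real n - real i)"
      by (simp add: binomial_gbinomial gbinomial_prod_rev)
    moreover have "(\<Prod>i=0..<k. 1 - real i / real n) = (\<Prod>i=0..<k. (real n - real i) / real n)"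
      using \<open>n > 0\<close> by (intro prod.cong) (auto simp: field_simps)
    then have "(\<Prod>i=0..<k. 1 - real i / real n) = (\<Prod>i=0..<k. real n - real i) / real n ^ k"
      by (simp add: prod_dividef)
    ultimately show "(\<Prod>i=0..<k. 1 - real i / real n) = fact k * real (n choose k) / real n ^ k"
      by simp
  qed
qed

lemma eventually_le_imp_le_add_const:
  fixes f g :: "nat \<Rightarrow> real"
  assumes "\<forall>\<^sub>F k in sequentially. f k \<le> g k" and "\<And>k. 0 \<le> g k"
  obtains C where "\<And>k. f k \<le> g k + C"
proof -
  obtain N where N: "\<And>k. k \<ge> N \<Longrightarrow> f k \<le> g k"
    using assms(1) unfolding eventually_sequentially by blast
  define C where "C = (\<Sum>k<N. \<bar>f k\<bar>)"
  have "f k \<le> g k + C" for k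
  proof (cases "k < N")
    case True
    have "f k \<le> \<bar>f k\<bar>" by simp
    also have "\<dots> \<le> C"
      unfolding C_def using True by (intro member_le_sum) auto
    finally have "f k \<le> C" .
    then show ?thesis using assms(2)[of k] by linarith
  next
    case False
    then show ?thesis
      using N[of k] by (simp add: C_def add_increasing2 sum_nonneg)
  qed
  then show ?thesis using that by blast
qed

lemma powr_sub_eq_power:
  assumes "x > 0"
  shows "x powr (real k / p - real k) = (x powr (1 / p) / x) ^ k"
  using assms by (simp add: powr_diff powr_powr powr_realpow power_divide mult.commute
      flip: powr_realpow[of "x powr (1 / p)"])

lemma small_mult_powr_one_minus:
  assumes "p > 1" and "\<epsilon> > 0"
  obtains T :: real where "T > 0" and "A * T powr (1 - p) < \<epsilon>"
proof -
  have "((\<lambda>T::real. A * T powr (1 - p)) \<longlongrightarrow> A * 0) at_top"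
    using \<open>p > 1\<close> by (intro tendsto_mult tendsto_const tendsto_neg_powr filterlim_ident) auto
  then have "\<forall>\<^sub>F T in at_top. A * T powr (1 - p) < \<epsilon>"
    using \<open>\<epsilon> > 0\<close> by (simp add: order_tendstoD(2))
  then have "\<forall>\<^sub>F T in at_top. 0 < T \<and> A * T powr (1 - p) < \<epsilon>"
    by (intro eventually_conj eventually_gt_at_top)
  then show ?thesis
    using that unfolding eventually_at_top_linorder by (metis order_refl)
qed

section \<open>Counting copies of \<open>Q\<close>\<close>

lemma iso_card_verts: "iso G Q \<Longrightarrow> card (verts G) = card (verts Q)"
  unfolding iso_def using bij_betw_same_card by blast

lemma verts_induced [simp]: "verts (induced H I) = I"
  and edges_induced [simp]: "edges (induced H I) = {e \<in> edges H. e \<subseteq> I}"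
  by (auto simp: induced_def verts_def edges_def)

lemma induced_verts: "rgraph r H \<Longrightarrow> induced H (verts H) = H"
  unfolding rgraph_def induced_def verts_def edges_def by (cases H) auto

definition subgraph_bound :: "nat \<Rightarrow> nat" where
  "subgraph_bound n = 2 ^ n * 2 ^ 2 ^ n"

lemma numsub_le_subgraph_bound:
  assumes "finite (verts H)"
  shows "numsub Q H \<le> subgraph_bound (card (verts H))"
proof -
  have "G \<in> Pow (verts H) \<times> Pow (Pow (verts H))"
    if "verts G \<subseteq> verts H" and "\<forall>e\<in>edges G. e \<subseteq> verts G" for G
    using that by (cases G) (auto simp: verts_def edges_def)
  then have "numsub Q H \<le> card (Pow (verts H) \<times> Pow (Pow (verts H)))"
    unfolding numsub_def using assms by (intro card_mono) auto
  then show ?thesis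
    using assms by (simp add: subgraph_bound_def card_cartesian_product card_Pow)
qed

text \<open>Every copy of \<open>Q\<close> in \<open>H[S]\<close> spans exactly one \<open>s\<close>-subset of \<open>S\<close>.\<close>
lemma numsub_induced_eq_sum:
  assumes fin: "finite S" and s: "card (verts Q) = s" and "s > 0"
  shows "numsub Q (induced H S) = (\<Sum>I\<in>{I. I \<subseteq> S \<and> card I = s}. numsub Q (induced H I))"
proof -
  define copies where "copies I = {G. verts G \<subseteq> I \<and> edges G \<subseteq> {e \<in> edges H. e \<subseteq> I}
      \<and> (\<forall>e\<in>edges G. e \<subseteq> verts G) \<and> iso G Q}" for I
  have numsub_copies: "numsub Q (induced H I) = card (copies I)" for I
    by (simp add: numsub_def copies_def)
  have verts_copy: "card (verts G) = s" if "G \<in> copies I" for G I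
    using that iso_card_verts[of G Q] s by (simp add: copies_def)
  have fin_copies: "finite (copies I)" if "finite I" for I
  proof (rule finite_subset)
    show "copies I \<subseteq> Pow I \<times> Pow (Pow I)"
      by (auto simp: copies_def verts_def edges_def)
  qed (use that in simp)
  have fibre: "copies I = {G \<in> copies S. verts G = I}" if I: "I \<in> {I. I \<subseteq> S \<and> card I = s}" for I
  proof -
    have "finite I" using I \<open>s > 0\<close> card_ge_0_finite by auto
    then have "verts G = I" if "G \<in> copies I" for G
      using that verts_copy[OF that] I card_subset_eq[of I "verts G"] by (simp add: copies_def)
    moreover have "copies I \<subseteq> copies S"
      using I unfolding copies_def by auto
    moreover have "G \<in> copies I" if "G \<in> copies S" and "verts G = I" for G
      using that unfolding copies_def by auto
    ultimately show ?thesis by blast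
  qed
  have partition: "copies S = (\<Union>I\<in>{I. I \<subseteq> S \<and> card I = s}. {G \<in> copies S. verts G = I})"
    using verts_copy by (auto simp: copies_def)
  have "card (copies S) = (\<Sum>I\<in>{I. I \<subseteq> S \<and> card I = s}. card {G \<in> copies S. verts G = I})"
    by (subst partition, rule card_UN_disjoint) (use fin fin_copies in auto)
  then show ?thesis
    using fibre by (simp add: numsub_copies)
qed

lemma polyQ_le_abs: "polyQ Q H x \<le> polyQ Q H (\<lambda>i. \<bar>x i\<bar>)"
  unfolding polyQ_def
  by (intro mult_left_mono sum_mono) (auto simp: abs_prod[symmetric] intro: mult_left_mono)

lemma polyQ_scale: "polyQ Q H (\<lambda>i. c * w i) = c ^ card (verts Q) * polyQ Q H w"
  unfolding polyQ_def sum_distrib_left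
  by (intro sum.cong refl) (auto simp: prod.distrib)

lemma polyQ_const:
  assumes "rgraph r H" and s: "card (verts Q) = s" and "s > 0"
  shows "polyQ Q H (\<lambda>_. c) = fact s * real (numsub Q H) * c ^ s"
proof -
  have "polyQ Q H (\<lambda>_. c) = fact s * (\<Sum>I\<in>{I. I \<subseteq> verts H \<and> card I = s}. real (numsub Q (induced H I))) * c ^ s"
    unfolding polyQ_def s by (simp add: sum_distrib_left sum_distrib_right mult.assoc)
  also have "\<dots> = fact s * real (numsub Q H) * c ^ s"
    using numsub_induced_eq_sum[of "verts H" Q s H] assms induced_verts[of r H]
    by (simp add: rgraph_def)
  finally show ?thesis .
qed

lemma polyQ_eq_expectation:
  assumes fin: "finite (verts H)" and s: "card (verts Q) = s" and "s > 0"
  shows "polyQ Q H q = fact s *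
    (\<Sum>S\<in>Pow (verts H). bernoulli_weight (verts H) q S * real (numsub Q (induced H S)))"
proof -
  have "real (numsub Q (induced H S)) = (\<Sum>I\<in>{I. I \<subseteq> S \<and> card I = s}. real (numsub Q (induced H I)))"
    if "S \<in> Pow (verts H)" for S
  proof -
    have "finite S" using that fin finite_subset by blast
    then show ?thesis using numsub_induced_eq_sum[of S Q s H] \<open>s > 0\<close> s by simp
  qed
  then have "(\<Sum>S\<in>Pow (verts H). bernoulli_weight (verts H) q S * real (numsub Q (induced H S)))
    = (\<Sum>S\<in>Pow (verts H). bernoulli_weight (verts H) q S *
        (\<Sum>I\<in>{I. I \<subseteq> S \<and> card I = s}. real (numsub Q (induced H I))))"
    by (intro sum.cong) simp_all
  then show ?thesis
    unfolding polyQ_def s sum_bernoulli_weight_mult_sum_subsets[OF fin] by simp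
qed

lemma polyQ_diff_le:
  fixes u y :: "nat \<Rightarrow> real"
  assumes fin: "finite (verts H)" and s: "card (verts Q) = s"
    and "\<And>i. i \<in> verts H \<Longrightarrow> 0 \<le> u i" and "\<And>i. i \<in> verts H \<Longrightarrow> u i \<le> y i"
  shows "polyQ Q H y - polyQ Q H u
    \<le> subgraph_bound s * ((\<Sum>i\<in>verts H. y i) ^ s - (\<Sum>i\<in>verts H. u i) ^ s)"
proof -
  let ?K = "{I. I \<subseteq> verts H \<and> card I = s}"
  have "polyQ Q H y - polyQ Q H u
      = fact s * (\<Sum>I\<in>?K. real (numsub Q (induced H I)) * ((\<Prod>i\<in>I. y i) - (\<Prod>i\<in>I. u i)))"
    unfolding polyQ_def s by (simp add: algebra_simps sum_subtractf)
  also have "\<dots> \<le> fact s * (\<Sum>I\<in>?K. real (subgraph_bound s) * ((\<Prod>i\<in>I. y i) - (\<Prod>i\<in>I. u i)))"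
  proof (intro mult_left_mono sum_mono mult_right_mono)
    fix I assume "I \<in> ?K"
    then have "finite I" using fin finite_subset by blast
    then show "real (numsub Q (induced H I)) \<le> real (subgraph_bound s)"
      using numsub_le_subgraph_bound[of "induced H I" Q] \<open>I \<in> ?K\<close> by simp
    show "0 \<le> (\<Prod>i\<in>I. y i) - (\<Prod>i\<in>I. u i)"
      using assms(3,4) \<open>I \<in> ?K\<close> by (auto intro!: prod_mono)
  qed simp
  also have "\<dots> = subgraph_bound s * (fact s * (esym s (verts H) y - esym s (verts H) u))"
    by (simp add: esym_def algebra_simps sum_subtractf sum_distrib_left)
  also have "\<dots> \<le> subgraph_bound s * ((\<Sum>i\<in>verts H. y i) ^ s - (\<Sum>i\<in>verts H. u i) ^ s)"
    using fact_esym_diff_le[OF fin, of u y s] assms(3,4) by (intro mult_left_mono) auto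
  finally show ?thesis .
qed

lemma lam_le:
  assumes "\<And>x. pnorm p (verts H) x = 1 \<Longrightarrow> polyQ Q H x \<le> B"
    and "finite (verts H)" and "verts H \<noteq> {}" and "p > 0"
  shows "lam p Q H \<le> B"
  unfolding lam_def using assms pnorm_uniform[of "verts H" p] by (intro cSup_least) auto

lemma polyQ_le_lam:
  assumes "\<And>x. pnorm p (verts H) x = 1 \<Longrightarrow> polyQ Q H x \<le> B" and "pnorm p (verts H) x = 1"
  shows "polyQ Q H x \<le> lam p Q H"
  unfolding lam_def using assms by (intro cSup_upper) (auto simp: bdd_above_def)

section \<open>Hereditary properties\<close>

definition ex_density :: "hgraph \<Rightarrow> hgraph set \<Rightarrow> nat \<Rightarrow> real" where
  "ex_density Q P n = real (ex_num Q P n) / real (n choose card (verts Q))"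

locale hereditary_counting =
  fixes r s :: nat and Q :: hgraph and P :: "hgraph set"
  assumes hereditary: "hereditary r P" and nonempty: "P \<noteq> {}"
    and card_verts_Q: "card (verts Q) = s" and s_pos: "0 < s"
begin

lemma rgraph_of_mem: "H \<in> P \<Longrightarrow> rgraph r H"
  using hereditary by (simp add: hereditary_def)

lemma finite_verts: "H \<in> P \<Longrightarrow> finite (verts H)"
  using rgraph_of_mem by (simp add: rgraph_def)

lemma induced_mem: "H \<in> P \<Longrightarrow> I \<subseteq> verts H \<Longrightarrow> induced H I \<in> P"
  using hereditary unfolding hereditary_def by blast

lemma Pn_nonempty: "Pn P n \<noteq> {}"
proof (induction n)
  case 0
  obtain H where "H \<in> P" using nonempty by blast
  then have "induced H {} \<in> Pn P 0"
    using induced_mem by (simp add: Pn_def)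
  then show ?case by blast
next
  case (Suc n)
  then obtain H where H: "H \<in> P" "card (verts H) = n" by (auto simp: Pn_def)
  obtain v :: nat where v: "v \<notin> verts H"
    using finite_verts[OF H(1)] ex_new_if_finite infinite_UNIV_nat by blast
  then have "(insert v (verts H), edges H) \<in> P"
    using hereditary H(1) unfolding hereditary_def by blast
  moreover have "card (insert v (verts H)) = Suc n"
    using H v finite_verts[OF H(1)] by simp
  ultimately show ?case by (force simp: Pn_def verts_def)
qed

lemma finite_numsub_image: "finite (numsub Q ` Pn P n)"
proof (rule finite_subset)
  show "numsub Q ` Pn P n \<subseteq> {..subgraph_bound n}"
    using numsub_le_subgraph_bound finite_verts by (fastforce simp: Pn_def)
qed simp

lemma numsub_le_ex_num: "H \<in> Pn P n \<Longrightarrow> numsub Q H \<le> ex_num Q P n"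
  unfolding ex_num_def using finite_numsub_image by (intro Max_ge) auto

lemma ex_num_attained:
  obtains H where "H \<in> Pn P n" and "numsub Q H = ex_num Q P n"
proof -
  have "ex_num Q P n \<in> numsub Q ` Pn P n"
    unfolding ex_num_def using finite_numsub_image Pn_nonempty by (intro Max_in) auto
  then obtain H where "H \<in> Pn P n" "ex_num Q P n = numsub Q H" by auto
  then show ?thesis using that by simp
qed

lemma numsub_induced_le_ex_num:
  "H \<in> P \<Longrightarrow> S \<subseteq> verts H \<Longrightarrow> numsub Q (induced H S) \<le> ex_num Q P (card S)"
  using induced_mem by (intro numsub_le_ex_num) (simp add: Pn_def)

lemma numsub_eq_sum:
  "H \<in> P \<Longrightarrow> numsub Q H = (\<Sum>I\<in>{I. I \<subseteq> verts H \<and> card I = s}. numsub Q (induced H I))"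
  using numsub_induced_eq_sum[OF finite_verts card_verts_Q s_pos, of H H]
    induced_verts[OF rgraph_of_mem] by simp

lemma ex_num_le_binomial: "ex_num Q P n \<le> subgraph_bound s * (n choose s)"
proof -
  obtain H where H: "H \<in> Pn P n" "numsub Q H = ex_num Q P n"
    by (rule ex_num_attained)
  then have "H \<in> P" and "card (verts H) = n" by (auto simp: Pn_def)
  have "ex_num Q P n = (\<Sum>I\<in>{I. I \<subseteq> verts H \<and> card I = s}. numsub Q (induced H I))"
    using numsub_eq_sum[OF \<open>H \<in> P\<close>] H(2) by simp
  also have "\<dots> \<le> (\<Sum>I\<in>{I. I \<subseteq> verts H \<and> card I = s}. subgraph_bound s)"
    using finite_verts[OF \<open>H \<in> P\<close>] numsub_le_subgraph_bound[of "induced H _" Q]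
    by (intro sum_mono) (auto dest: finite_subset)
  also have "\<dots> = subgraph_bound s * (n choose s)"
    using n_subsets[OF finite_verts[OF \<open>H \<in> P\<close>], of s] \<open>card (verts H) = n\<close> by simp
  finally show ?thesis .
qed

text \<open>Double counting: each \<open>s\<close>-set of an \<open>n\<close>-vertex graph survives the deletion of
  exactly \<open>n - s\<close> vertices.\<close>
lemma ex_num_deletion:
  assumes "s < n"
  shows "ex_num Q P n * (n - s) \<le> n * ex_num Q P (n - 1)"
proof -
  obtain H where H: "H \<in> Pn P n" "numsub Q H = ex_num Q P n"
    by (rule ex_num_attained)
  define V where "V = verts H"
  have "H \<in> P" and card_V: "card V = n" using H by (auto simp: Pn_def V_def)
  have fin: "finite V" using finite_verts[OF \<open>H \<in> P\<close>] by (simp add: V_def)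
  let ?K = "{I. I \<subseteq> V \<and> card I = s}" and ?c = "\<lambda>I. numsub Q (induced H I)"
  have "ex_num Q P n * (n - s) = (\<Sum>I\<in>?K. ?c I * (n - s))"
    using numsub_eq_sum[OF \<open>H \<in> P\<close>] H(2) by (simp add: V_def sum_distrib_right)
  also have "\<dots> = (\<Sum>I\<in>?K. \<Sum>v\<in>{v \<in> V. v \<notin> I}. ?c I)"
  proof (intro sum.cong refl)
    fix I assume "I \<in> ?K"
    then have "card {v \<in> V. v \<notin> I} = n - s"
      using fin card_V card_Diff_subset[of I V] finite_subset[of I V] by (simp add: set_diff_eq)
    then show "?c I * (n - s) = (\<Sum>v\<in>{v \<in> V. v \<notin> I}. ?c I)" by simp
  qed
  also have "\<dots> = (\<Sum>v\<in>V. \<Sum>I\<in>{I \<in> ?K. v \<notin> I}. ?c I)"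
    by (rule sum.swap_restrict[symmetric]) (use fin in auto)
  also have "\<dots> = (\<Sum>v\<in>V. numsub Q (induced H (V - {v})))"
  proof (intro sum.cong refl)
    fix v assume "v \<in> V"
    have "{I \<in> ?K. v \<notin> I} = {I. I \<subseteq> V - {v} \<and> card I = s}" by auto
    then show "(\<Sum>I\<in>{I \<in> ?K. v \<notin> I}. ?c I) = numsub Q (induced H (V - {v}))"
      using numsub_induced_eq_sum[of "V - {v}" Q s H] fin card_verts_Q s_pos by simp
  qed
  also have "\<dots> \<le> (\<Sum>v\<in>V. ex_num Q P (n - 1))"
  proof (intro sum_mono)
    fix v assume "v \<in> V"
    then have "card (V - {v}) = n - 1" using fin card_V by simp
    then show "numsub Q (induced H (V - {v})) \<le> ex_num Q P (n - 1)"
      using numsub_induced_le_ex_num[OF \<open>H \<in> P\<close>, of "V - {v}"] by (auto simp: V_def)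
  qed
  also have "\<dots> = n * ex_num Q P (n - 1)"
    using card_V by simp
  finally show ?thesis .
qed

lemma ex_density_antimono:
  assumes "s < n"
  shows "ex_density Q P n \<le> ex_density Q P (n - 1)"
proof -
  have pos: "real (n choose s) > 0" "real ((n - 1) choose s) > 0"
    using assms by simp_all
  have absorb: "real (n - s) * real (n choose s) = real n * real ((n - 1) choose s)"
    using binomial_absorb_comp[of n s] by (metis of_nat_mult)
  have deletion: "real (ex_num Q P n) * real (n - s) \<le> real n * real (ex_num Q P (n - 1))"
    using ex_num_deletion[OF assms] by (metis of_nat_le_iff of_nat_mult)
  have "real (ex_num Q P n) * real ((n - 1) choose s) * real n
      = real (ex_num Q P n) * real (n - s) * real (n choose s)"
    using absorb by (simp add: algebra_simps)
  also have "\<dots> \<le> real n * real (ex_num Q P (n - 1)) * real (n choose s)"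
    using deletion pos by (intro mult_right_mono) auto
  finally have "real (ex_num Q P n) * real ((n - 1) choose s) \<le> real (ex_num Q P (n - 1)) * real (n choose s)"
    using assms by (simp add: algebra_simps)
  then show ?thesis
    using pos by (simp add: ex_density_def card_verts_Q divide_simps)
qed

lemma ex_density_tendsto: "ex_density Q P \<longlonglongrightarrow> pi_dens Q P"
proof -
  define d where "d k = ex_density Q P (k + Suc s)" for k
  have "decseq d"
    unfolding d_def using ex_density_antimono[of "Suc _ + Suc s"] by (intro decseq_SucI) simp
  moreover have "Bseq d"
  proof (rule BseqI')
    fix k
    have "0 \<le> d k" by (simp add: d_def ex_density_def)
    then show "norm (d k) \<le> d 0"
      using decseqD[OF \<open>decseq d\<close>, of 0 k] by simp
  qed
  ultimately have "convergent d"
    using Bseq_monoseq_convergent decseq_imp_monoseq by blast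
  then have "convergent (ex_density Q P)"
    unfolding d_def using convergent_ignore_initial_segment by blast
  then show ?thesis
    by (simp add: convergent_LIMSEQ_iff pi_dens_def ex_density_def[abs_def])
qed

lemma pi_dens_nonneg: "0 \<le> pi_dens Q P"
  using ex_density_tendsto by (rule LIMSEQ_le_const) (simp add: ex_density_def)

lemma polyQ_le_expected_ex_num:
  assumes "H \<in> P" and q: "\<And>i. i \<in> verts H \<Longrightarrow> 0 \<le> q i \<and> q i \<le> 1"
    and ex_le: "\<And>k. real (ex_num Q P k) \<le> \<beta> * real (k choose s) + C0"
  shows "polyQ Q H q \<le> fact s * (\<beta> * esym s (verts H) q + C0)"
proof -
  let ?V = "verts H" and ?w = "bernoulli_weight (verts H) q"
  have fin: "finite ?V" using finite_verts[OF \<open>H \<in> P\<close>] .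
  have "polyQ Q H q = fact s * (\<Sum>S\<in>Pow ?V. ?w S * real (numsub Q (induced H S)))"
    using polyQ_eq_expectation[OF fin card_verts_Q s_pos] .
  also have "\<dots> \<le> fact s * (\<Sum>S\<in>Pow ?V. ?w S * (\<beta> * real (card S choose s) + C0))"
  proof (rule mult_left_mono[OF sum_mono])
    fix S assume "S \<in> Pow ?V"
    then have "real (numsub Q (induced H S)) \<le> \<beta> * real (card S choose s) + C0"
      using numsub_induced_le_ex_num[OF \<open>H \<in> P\<close>, of S] ex_le[of "card S"] by simp
    then show "?w S * real (numsub Q (induced H S)) \<le> ?w S * (\<beta> * real (card S choose s) + C0)"
      using bernoulli_weight_nonneg[of ?V q S] q \<open>S \<in> Pow ?V\<close> by (intro mult_left_mono) auto
  qed simp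
  also have "\<dots> = fact s * (\<beta> * esym s ?V q + C0)"
    using sum_bernoulli_weight_binomial[OF fin] sum_bernoulli_weight[OF fin]
    by (simp add: algebra_simps sum.distrib sum_distrib_left[symmetric])
  finally show ?thesis .
qed

lemma polyQ_truncated_le:
  assumes "H \<in> P" and "c > 0" and "\<beta> \<ge> 0"
    and u: "\<And>i. i \<in> verts H \<Longrightarrow> 0 \<le> u i \<and> u i \<le> c"
    and ex_le: "\<And>k. real (ex_num Q P k) \<le> \<beta> * real (k choose s) + C0"
  shows "polyQ Q H u \<le> \<beta> * (\<Sum>i\<in>verts H. u i) ^ s + fact s * c ^ s * C0"
proof -
  have fin: "finite (verts H)" using finite_verts[OF \<open>H \<in> P\<close>] .
  have u_eq: "u = (\<lambda>i. c * (u i / c))" using \<open>c > 0\<close> by simp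
  have "polyQ Q H u = c ^ s * polyQ Q H (\<lambda>i. u i / c)"
    by (subst u_eq, subst polyQ_scale) (simp add: card_verts_Q)
  also have "\<dots> \<le> c ^ s * (fact s * (\<beta> * esym s (verts H) (\<lambda>i. u i / c) + C0))"
    using polyQ_le_expected_ex_num[OF \<open>H \<in> P\<close> _ ex_le] u \<open>c > 0\<close>
    by (intro mult_left_mono) auto
  also have "\<dots> = \<beta> * (fact s * esym s (verts H) u) + fact s * c ^ s * C0"
    by (subst (2) u_eq, subst esym_scale) (simp add: algebra_simps)
  also have "\<dots> \<le> \<beta> * (\<Sum>i\<in>verts H. u i) ^ s + fact s * c ^ s * C0"
    using fact_esym_le_sum_power[OF fin, of u s] u \<open>\<beta> \<ge> 0\<close> \<open>c > 0\<close>
    by (intro add_mono mult_left_mono) auto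
  finally show ?thesis .
qed

lemma polyQ_le_on_unit_sphere:
  assumes "p > 1" and "\<beta> \<ge> 0" and "T > 0"
    and ex_le: "\<And>k. real (ex_num Q P k) \<le> \<beta> * real (k choose s) + C0"
    and "H \<in> P" and "verts H \<noteq> {}" and "pnorm p (verts H) x = 1"
  defines "n \<equiv> real (card (verts H))"
  shows "polyQ Q H x \<le> (\<beta> + real (subgraph_bound s) * real s * T powr (1 - p) + fact s * C0 * T ^ s / n ^ s)
    * (n / n powr (1 / p)) ^ s"
proof -
  define V where "V = verts H"
  define m where "m = n powr (1 / p)"
  define y where "y i = \<bar>x i\<bar>" for i
  define u where "u i = min (y i) (T / m)" for i
  let ?K = "real (subgraph_bound s)" and ?\<tau> = "T powr (1 - p)"
  have fin: "finite V" using finite_verts[OF \<open>H \<in> P\<close>] by (simp add: V_def)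
  have "n > 0" using fin \<open>verts H \<noteq> {}\<close> by (simp add: n_def V_def card_gt_0_iff)
  then have "m > 0" by (simp add: m_def)
  have y_nonneg: "0 \<le> y i" for i by (simp add: y_def)
  have u: "0 \<le> u i" "u i \<le> y i" "u i \<le> T / m" for i
    using y_nonneg \<open>m > 0\<close> \<open>T > 0\<close> by (simp_all add: u_def)
  have y_powr: "(\<Sum>i\<in>V. y i powr p) = 1"
    using sum_powr_eq_one_if_pnorm_eq_one assms(1,7) by (simp add: y_def V_def)
  have sum_u: "(\<Sum>i\<in>V. u i) \<le> n / m"
    using sum_le_if_sum_powr_eq_one[OF fin _ \<open>p > 1\<close> _ y_powr] \<open>verts H \<noteq> {}\<close> y_nonneg
      sum_mono[of V u y] u(2) by (force simp: V_def n_def m_def)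
  have gap: "(\<Sum>i\<in>V. y i) ^ s - (\<Sum>i\<in>V. u i) ^ s \<le> s * ?\<tau> * (n / m) ^ s"
    using power_sum_min_gap_le[OF fin _ \<open>p > 1\<close> \<open>T > 0\<close> _ y_powr] \<open>verts H \<noteq> {}\<close> y_nonneg
    by (simp add: u_def V_def n_def m_def)
  have "polyQ Q H x \<le> polyQ Q H u + (polyQ Q H y - polyQ Q H u)"
    using polyQ_le_abs[of Q H x] by (simp add: y_def[abs_def])
  also have "\<dots> \<le> (\<beta> * (\<Sum>i\<in>V. u i) ^ s + fact s * (T / m) ^ s * C0)
      + ?K * ((\<Sum>i\<in>V. y i) ^ s - (\<Sum>i\<in>V. u i) ^ s)"
    using polyQ_truncated_le[OF \<open>H \<in> P\<close> _ \<open>\<beta> \<ge> 0\<close> _ ex_le] \<open>m > 0\<close> \<open>T > 0\<close>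
      polyQ_diff_le[OF _ card_verts_Q, of H u y] fin u
    by (intro add_mono) (simp_all add: V_def)
  also have "\<dots> \<le> (\<beta> * (n / m) ^ s + fact s * (T / m) ^ s * C0) + ?K * (s * ?\<tau> * (n / m) ^ s)"
  proof (rule add_mono[OF add_mono[OF mult_left_mono order.refl] mult_left_mono])
    show "(\<Sum>i\<in>V. u i) ^ s \<le> (n / m) ^ s"
      using sum_u u by (intro power_mono sum_nonneg) auto
  qed (use gap \<open>\<beta> \<ge> 0\<close> in auto)
  also have "\<dots> = (\<beta> + ?K * s * ?\<tau> + fact s * C0 * T ^ s / n ^ s) * (n / m) ^ s"
  proof -
    have "(T / m) ^ s = T ^ s / n ^ s * (n / m) ^ s"
      using \<open>n > 0\<close> \<open>m > 0\<close> by (simp add: power_divide)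
    then show ?thesis by (simp add: algebra_simps)
  qed
  finally show ?thesis by (simp add: m_def)
qed

lemma lam_le_of_mem_Pn:
  assumes "p > 0" and "n > 0" and "H \<in> Pn P n"
    and "\<And>x. pnorm p (verts H) x = 1 \<Longrightarrow> polyQ Q H x \<le> B"
  shows "lam p Q H \<le> B"
proof (rule lam_le)
  have "H \<in> P" and "card (verts H) = n" using \<open>H \<in> Pn P n\<close> by (auto simp: Pn_def)
  then show "finite (verts H)" and "verts H \<noteq> {}"
    using finite_verts \<open>n > 0\<close> by auto
qed (use assms in auto)

lemma lam_n_le:
  assumes "p > 0" and "n > 0"
    and "\<And>H x. H \<in> Pn P n \<Longrightarrow> pnorm p (verts H) x = 1 \<Longrightarrow> polyQ Q H x \<le> B"
  shows "lam_n p Q P n \<le> B"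
  unfolding lam_n_def using Pn_nonempty lam_le_of_mem_Pn[OF assms(1,2) _ assms(3)]
  by (intro cSup_least) auto

lemma polyQ_bounded:
  assumes "p > 1" and "n > 0"
  obtains B where "\<And>H x. H \<in> Pn P n \<Longrightarrow> pnorm p (verts H) x = 1 \<Longrightarrow> polyQ Q H x \<le> B"
proof -
  have "real (ex_num Q P k) \<le> real (subgraph_bound s) * real (k choose s) + 0" for k
    using ex_num_le_binomial by (simp flip: of_nat_mult)
  note bound = polyQ_le_on_unit_sphere[OF \<open>p > 1\<close> _ zero_less_one this]
  show ?thesis
  proof (rule that)
    fix H x assume "H \<in> Pn P n" and "pnorm p (verts H) x = 1"
    then have "H \<in> P" and "card (verts H) = n" by (auto simp: Pn_def)
    moreover have "verts H \<noteq> {}" using \<open>card (verts H) = n\<close> \<open>n > 0\<close> by auto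
    ultimately show "polyQ Q H x \<le> real (subgraph_bound s) * (1 + s) * (real n / real n powr (1 / p)) ^ s"
      using bound[of H x] \<open>pnorm p (verts H) x = 1\<close> by (simp add: algebra_simps)
  qed
qed

lemma polyQ_le_lam_n:
  assumes "p > 1" and "H \<in> Pn P n" and "verts H \<noteq> {}" and "pnorm p (verts H) x = 1"
  shows "polyQ Q H x \<le> lam_n p Q P n"
proof -
  have "H \<in> P" and "card (verts H) = n" using assms(2) by (auto simp: Pn_def)
  then have "n > 0" using assms(3) finite_verts card_gt_0_iff by blast
  obtain B where B: "\<And>H x. H \<in> Pn P n \<Longrightarrow> pnorm p (verts H) x = 1 \<Longrightarrow> polyQ Q H x \<le> B"
    using polyQ_bounded[OF \<open>p > 1\<close> \<open>n > 0\<close>] by blast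
  have "polyQ Q H x \<le> lam p Q H"
    using polyQ_le_lam[OF B] assms(2,4) by blast
  also have "\<dots> \<le> lam_n p Q P n"
    unfolding lam_n_def
  proof (rule cSup_upper)
    have "lam p Q G \<le> B" if "G \<in> Pn P n" for G
      using that \<open>p > 1\<close> \<open>n > 0\<close> by (intro lam_le_of_mem_Pn[where B = B]) (auto intro: B)
    then show "bdd_above (lam p Q ` Pn P n)"
      by (intro bdd_aboveI2)
  qed (use assms(2) in simp)
  finally show ?thesis .
qed

lemma lam_n_scaled_le:
  assumes "p > 1" and "\<beta> \<ge> 0" and "T > 0"
    and ex_le: "\<And>k. real (ex_num Q P k) \<le> \<beta> * real (k choose s) + C0" and "n > 0"
  shows "lam_n p Q P n * real n powr (real s / p - real s)
    \<le> \<beta> + real (subgraph_bound s) * real s * T powr (1 - p) + fact s * C0 * T ^ s / real n ^ s"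
    (is "_ \<le> ?B")
proof -
  define m where "m = real n powr (1 / p)"
  have "m > 0" using \<open>n > 0\<close> by (simp add: m_def)
  have "lam_n p Q P n \<le> ?B * (real n / m) ^ s"
  proof (rule lam_n_le)
    fix H x assume "H \<in> Pn P n" and "pnorm p (verts H) x = 1"
    then have "H \<in> P" and "card (verts H) = n" by (auto simp: Pn_def)
    then have "verts H \<noteq> {}" using \<open>n > 0\<close> by auto
    then show "polyQ Q H x \<le> ?B * (real n / m) ^ s"
      using polyQ_le_on_unit_sphere[OF assms(1-4) \<open>H \<in> P\<close> _ \<open>pnorm p (verts H) x = 1\<close>]
      by (simp add: m_def \<open>card (verts H) = n\<close>)
  qed (use \<open>p > 1\<close> \<open>n > 0\<close> in auto)
  then have "lam_n p Q P n * (m / real n) ^ s \<le> ?B * (real n / m) ^ s * (m / real n) ^ s"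
    using \<open>m > 0\<close> by (intro mult_right_mono) auto
  also have "\<dots> = ?B"
    using \<open>m > 0\<close> \<open>n > 0\<close> by (simp flip: power_mult_distrib)
  finally show ?thesis
    using \<open>n > 0\<close> by (simp add: powr_sub_eq_power m_def)
qed

lemma fact_ex_num_le_lam_n_scaled:
  assumes "p > 1" and "n > 0"
  shows "fact s * real (ex_num Q P n) / real n ^ s \<le> lam_n p Q P n * real n powr (real s / p - real s)"
proof -
  obtain H where H: "H \<in> Pn P n" "numsub Q H = ex_num Q P n"
    by (rule ex_num_attained)
  then have "H \<in> P" and "card (verts H) = n" by (auto simp: Pn_def)
  then have "finite (verts H)" and "verts H \<noteq> {}"
    using finite_verts \<open>n > 0\<close> by auto
  define m where "m = real n powr (1 / p)"
  have "m > 0" using \<open>n > 0\<close> by (simp add: m_def)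
  have "fact s * real (ex_num Q P n) * (1 / m) ^ s = polyQ Q H (\<lambda>_. 1 / m)"
    using polyQ_const[OF rgraph_of_mem[OF \<open>H \<in> P\<close>] card_verts_Q s_pos] H(2) by simp
  also have "\<dots> \<le> lam_n p Q P n"
    using polyQ_le_lam_n[OF \<open>p > 1\<close> H(1) \<open>verts H \<noteq> {}\<close>]
      pnorm_uniform[OF \<open>finite (verts H)\<close> \<open>verts H \<noteq> {}\<close>] \<open>p > 1\<close> \<open>card (verts H) = n\<close>
    by (simp add: m_def)
  finally have "fact s * real (ex_num Q P n) * (1 / m) ^ s * (m / n) ^ s
      \<le> lam_n p Q P n * (m / n) ^ s"
    using \<open>m > 0\<close> by (intro mult_right_mono) auto
  then show ?thesis
    using \<open>m > 0\<close> \<open>n > 0\<close> by (simp add: powr_sub_eq_power m_def power_divide)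
qed

lemma fact_ex_num_div_power_tendsto:
  "(\<lambda>n. fact s * real (ex_num Q P n) / real n ^ s) \<longlonglongrightarrow> pi_dens Q P"
proof (rule Lim_transform_eventually)
  show "(\<lambda>n. ex_density Q P n * (fact s * real (n choose s) / real n ^ s)) \<longlonglongrightarrow> pi_dens Q P"
    using tendsto_mult[OF ex_density_tendsto fact_mult_binomial_div_power_tendsto] by simp
  show "\<forall>\<^sub>F n in sequentially. ex_density Q P n * (fact s * real (n choose s) / real n ^ s)
      = fact s * real (ex_num Q P n) / real n ^ s"
    using eventually_ge_at_top[of s]
    by eventually_elim (simp add: ex_density_def card_verts_Q)
qed

lemma ex_num_le_affine:
  assumes "pi_dens Q P < \<beta>"
  obtains C0 where "\<And>k. real (ex_num Q P k) \<le> \<beta> * real (k choose s) + C0"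
proof -
  have "\<beta> \<ge> 0" using pi_dens_nonneg assms by simp
  have "\<forall>\<^sub>F k in sequentially. ex_density Q P k < \<beta>"
    using order_tendstoD(2)[OF ex_density_tendsto assms] .
  then have "\<forall>\<^sub>F k in sequentially. real (ex_num Q P k) \<le> \<beta> * real (k choose s)"
    using eventually_ge_at_top[of s]
  proof eventually_elim
    case (elim k)
    then have "real (k choose s) > 0" by simp
    then show ?case
      using elim(1) by (simp add: ex_density_def card_verts_Q pos_divide_less_eq)
  qed
  then show ?thesis
    by (rule eventually_le_imp_le_add_const) (use \<open>\<beta> \<ge> 0\<close> that in auto)
qed

lemma eventually_lam_n_scaled_less:
  assumes "p > 1" and "pi_dens Q P < a"
  shows "\<forall>\<^sub>F n in sequentially. lam_n p Q P n * real n powr (real s / p - real s) < a"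
proof -
  define \<epsilon> where "\<epsilon> = (a - pi_dens Q P) / 3"
  define \<beta> where "\<beta> = pi_dens Q P + \<epsilon>"
  have "\<epsilon> > 0" and a: "a = \<beta> + \<epsilon> + \<epsilon>"
    using assms(2) by (simp_all add: \<epsilon>_def \<beta>_def field_simps)
  have "\<beta> \<ge> 0" and "pi_dens Q P < \<beta>"
    using pi_dens_nonneg \<open>\<epsilon> > 0\<close> by (simp_all add: \<beta>_def)
  obtain C0 where ex_le: "\<And>k. real (ex_num Q P k) \<le> \<beta> * real (k choose s) + C0"
    using ex_num_le_affine[OF \<open>pi_dens Q P < \<beta>\<close>] by blast
  obtain T where "T > 0" and T: "real (subgraph_bound s) * s * T powr (1 - p) < \<epsilon>"
    using small_mult_powr_one_minus[OF \<open>p > 1\<close> \<open>\<epsilon> > 0\<close>] by blast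
  have "(\<lambda>n. fact s * C0 * T ^ s / real n ^ s) \<longlonglongrightarrow> 0"
    by (intro tendsto_divide_0[OF tendsto_const] filterlim_at_top_imp_at_infinity
        filterlim_pow_at_top filterlim_real_sequentially s_pos)
  then have "\<forall>\<^sub>F n in sequentially. fact s * C0 * T ^ s / real n ^ s < \<epsilon>"
    using order_tendstoD(2) \<open>\<epsilon> > 0\<close> by blast
  then show ?thesis
    using eventually_gt_at_top[of 0]
  proof eventually_elim
    case (elim n)
    then show ?case
      using lam_n_scaled_le[OF \<open>p > 1\<close> \<open>\<beta> \<ge> 0\<close> \<open>T > 0\<close> ex_le elim(2)] elim(1) T a by linarith
  qed
qed

lemma lam_prop_eq_pi_dens:
  assumes "p > 1"
  shows "lam_prop p Q P = pi_dens Q P"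
proof -
  have "(\<lambda>n. lam_n p Q P n * real n powr (real s / p - real s)) \<longlonglongrightarrow> pi_dens Q P"
  proof (rule order_tendstoI)
    fix a assume "a < pi_dens Q P"
    then have "\<forall>\<^sub>F n in sequentially. a < fact s * real (ex_num Q P n) / real n ^ s"
      using order_tendstoD(1)[OF fact_ex_num_div_power_tendsto] by blast
    then show "\<forall>\<^sub>F n in sequentially. a < lam_n p Q P n * real n powr (real s / p - real s)"
      using eventually_gt_at_top[of 0]
    proof eventually_elim
      case (elim n)
      then show ?case
        using fact_ex_num_le_lam_n_scaled[OF assms, of n] by linarith
    qed
  qed (rule eventually_lam_n_scaled_less[OF assms])
  then show ?thesis
    unfolding lam_prop_def card_verts_Q by (rule limI)
qed

end

theorem theorem3p3:
  fixes r s :: nat and Q :: hgraph and P :: "hgraph set" and p :: real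
  assumes "2 \<le> r" and "r \<le> s"
    and "rgraph r Q" and "card (verts Q) = s"
    and "hereditary r P" and "P \<noteq> {}"
    and "p > 1"
  shows "lam_prop p Q P = pi_dens Q P"
proof -
  \<comment> \<open>\<open>r\<close> only serves to give \<open>0 < s\<close>.\<close>
  interpret hereditary_counting r s Q P
    using assms by unfold_locales auto
  show ?thesis
    using lam_prop_eq_pi_dens[OF \<open>p > 1\<close>] .
qed

end
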